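(* Let $f:\{0,1\}^n\to\{0,1\}$ be a Boolean function and $0<\epsilon<1$. Then $\operatorname{rdeg}_\epsilon(f)\le2\max\{\mathsf N_\epsilon(f),\mathsf N_\epsilon(\overline f)\}$.
   Context: $\mathsf N_\epsilon(f)$ is the minimum degree of a real polynomial $p$ with $|p(x)|\le\epsilon$ whenever $f(x)=0$ and $|p(x)|\ge1$ whenever $f(x)=1$; $\overline f=1-f$. The approximate rational degree $\operatorname{rdeg}_\epsilon(f)$ is the minimum of $\max\{\deg p,\deg q\}$ over real polynomials $p,q$ such that $q(x)\neq 0$ and $|f(x)-p(x)/q(x)|\le\epsilon$ for all $x\in\{0,1\}^n$. *)

theory Defs
  imports Complex_Main
begin

text \<open>Points of the Boolean cube {0,1}^n, represented as real vectors
  nat => real that are 0/1 on coordinates below n and 0 elsewhere.\<close>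
definition cube :: "nat \<Rightarrow> (nat \<Rightarrow> real) set" where
  "cube n = {x. (\<forall>i<n. x i \<in> {0, 1}) \<and> (\<forall>i\<ge>n. x i = 0)}"

text \<open>p is (the evaluation function of) a real polynomial in the n variables
  x 0, ..., x (n-1) of total degree at most d: a finite linear combination
  of monomials prod_i x_i^(alpha_i) with sum_i alpha_i <= d.\<close>
definition poly_deg_le :: "nat \<Rightarrow> nat \<Rightarrow> ((nat \<Rightarrow> real) \<Rightarrow> real) \<Rightarrow> bool" where
  "poly_deg_le n d p \<longleftrightarrow>
     (\<exists>(A :: (nat \<Rightarrow> nat) set) (c :: (nat \<Rightarrow> nat) \<Rightarrow> real).
        finite A \<and>
        (\<forall>\<alpha>\<in>A. (\<forall>i\<ge>n. \<alpha> i = 0) \<and> (\<Sum>i<n. \<alpha> i) \<le> d) \<and>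
        (\<forall>x. p x = (\<Sum>\<alpha>\<in>A. c \<alpha> * (\<Prod>i<n. x i ^ \<alpha> i))))"

definition Ndeg :: "nat \<Rightarrow> real \<Rightarrow> ((nat \<Rightarrow> real) \<Rightarrow> real) \<Rightarrow> nat" where
  "Ndeg n \<epsilon> f = (LEAST d. \<exists>p. poly_deg_le n d p \<and>
      (\<forall>x\<in>cube n. (f x = 0 \<longrightarrow> \<bar>p x\<bar> \<le> \<epsilon>) \<and> (f x = 1 \<longrightarrow> \<bar>p x\<bar> \<ge> 1)))"

text \<open>Approximate rational degree: minimum of max(deg p, deg q) over p, q with
  q nonzero on the cube and |f x - p x / q x| <= eps on the cube.
  (max(deg p, deg q) <= d iff both degrees are <= d.)\<close>
definition rdeg :: "nat \<Rightarrow> real \<Rightarrow> ((nat \<Rightarrow> real) \<Rightarrow> real) \<Rightarrow> nat" where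
  "rdeg n \<epsilon> f = (LEAST d. \<exists>p q. poly_deg_le n d p \<and> poly_deg_le n d q \<and>
      (\<forall>x\<in>cube n. q x \<noteq> 0 \<and> \<bar>f x - p x / q x\<bar> \<le> \<epsilon>))"

end

theory Submission
  imports Defs
begin

text \<open>Take one-sided approximations p of f and q of 1 - f, both of degree at most
  D = max(N(f), N(1 - f)), and approximate f by p^2 / (p^2 + q^2), of degree 2D.
  Where f x = 0 we have |p x| \<le> \<epsilon> and |q x| \<ge> 1, so the quotient is at most
  p^2 \<le> \<epsilon>^2 \<le> \<epsilon>; where f x = 1 the roles of p and q are swapped and the error is
  q^2 / (p^2 + q^2) \<le> \<epsilon>. The least degrees in the definitions of N are attained,
  since every function on the cube is interpolated by a polynomial of degree n.\<close>

lemma poly_deg_le_mono: "poly_deg_le n d p \<Longrightarrow> d \<le> d' \<Longrightarrow> poly_deg_le n d' p"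
  unfolding poly_deg_le_def by (meson order_trans)

lemma poly_deg_le_const: "poly_deg_le n d (\<lambda>x. k)"
  unfolding poly_deg_le_def
  by (rule exI[of _ "{\<lambda>_. 0}"], rule exI[of _ "\<lambda>_. k"]) simp

lemma poly_deg_le_var:
  assumes "j < n"
  shows "poly_deg_le n 1 (\<lambda>x. x j)"
proof -
  define \<alpha> :: "nat \<Rightarrow> nat" where "\<alpha> i = (if i = j then 1 else 0)" for i
  have "(\<Prod>i<n. x i ^ \<alpha> i) = x j" for x :: "nat \<Rightarrow> real"
  proof -
    have "(\<Prod>i<n. x i ^ \<alpha> i) = (\<Prod>i<n. if i = j then x i else 1)"
      by (rule prod.cong) (auto simp: \<alpha>_def)
    then show ?thesis using assms by (simp add: prod.delta)
  qed
  moreover have "(\<Sum>i<n. \<alpha> i) = 1" using assms by (simp add: \<alpha>_def sum.delta)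
  ultimately show ?thesis
    unfolding poly_deg_le_def using assms
    by (intro exI[of _ "{\<alpha>}"] exI[of _ "\<lambda>_. 1"]) (auto simp: \<alpha>_def)
qed

lemma poly_deg_le_add:
  assumes "poly_deg_le n d p" "poly_deg_le n d q"
  shows "poly_deg_le n d (\<lambda>x. p x + q x)"
proof -
  obtain A c where A: "finite A" "\<forall>\<alpha>\<in>A. (\<forall>i\<ge>n. \<alpha> i = 0) \<and> (\<Sum>i<n. \<alpha> i) \<le> d"
    "\<forall>x. p x = (\<Sum>\<alpha>\<in>A. c \<alpha> * (\<Prod>i<n. x i ^ \<alpha> i))"
    using assms(1) unfolding poly_deg_le_def by blast
  obtain B e where B: "finite B" "\<forall>\<alpha>\<in>B. (\<forall>i\<ge>n. \<alpha> i = 0) \<and> (\<Sum>i<n. \<alpha> i) \<le> d"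
    "\<forall>x. q x = (\<Sum>\<alpha>\<in>B. e \<alpha> * (\<Prod>i<n. x i ^ \<alpha> i))"
    using assms(2) unfolding poly_deg_le_def by blast
  define k where "k \<alpha> = (if \<alpha> \<in> A then c \<alpha> else 0) + (if \<alpha> \<in> B then e \<alpha> else 0)" for \<alpha>
  have extend: "(\<Sum>\<alpha>\<in>S. g \<alpha> * m \<alpha>) = (\<Sum>\<alpha>\<in>A \<union> B. (if \<alpha> \<in> S then g \<alpha> else 0) * m \<alpha>)"
    if "S \<subseteq> A \<union> B" for S and g m :: "(nat \<Rightarrow> nat) \<Rightarrow> real"
    using that A(1) B(1) by (intro sum.mono_neutral_cong_left) auto
  have "p x + q x = (\<Sum>\<alpha>\<in>A \<union> B. k \<alpha> * (\<Prod>i<n. x i ^ \<alpha> i))" for x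
    using A(3) B(3) by (simp add: extend[of A] extend[of B] k_def sum.distrib[symmetric] algebra_simps)
  then show ?thesis
    unfolding poly_deg_le_def using A(1,2) B(1,2)
    by (intro exI[of _ "A \<union> B"] exI[of _ k]) auto
qed

lemma poly_deg_le_mult:
  assumes "poly_deg_le n d1 p" "poly_deg_le n d2 q"
  shows "poly_deg_le n (d1 + d2) (\<lambda>x. p x * q x)"
proof -
  define m where "m \<alpha> x = (\<Prod>i<n. x i ^ \<alpha> i)" for \<alpha> and x :: "nat \<Rightarrow> real"
  obtain A c where A: "finite A" "\<forall>\<alpha>\<in>A. (\<forall>i\<ge>n. \<alpha> i = 0) \<and> (\<Sum>i<n. \<alpha> i) \<le> d1"
    "\<forall>x. p x = (\<Sum>\<alpha>\<in>A. c \<alpha> * m \<alpha> x)"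
    using assms(1) unfolding poly_deg_le_def m_def by blast
  obtain B e where B: "finite B" "\<forall>\<alpha>\<in>B. (\<forall>i\<ge>n. \<alpha> i = 0) \<and> (\<Sum>i<n. \<alpha> i) \<le> d2"
    "\<forall>x. q x = (\<Sum>\<alpha>\<in>B. e \<alpha> * m \<alpha> x)"
    using assms(2) unfolding poly_deg_le_def m_def by blast
  define g :: "(nat \<Rightarrow> nat) \<times> (nat \<Rightarrow> nat) \<Rightarrow> nat \<Rightarrow> nat"
    where "g ab i = fst ab i + snd ab i" for ab i
  define C where "C = g ` (A \<times> B)"
  define k where "k \<gamma> = (\<Sum>ab\<in>{ab \<in> A \<times> B. g ab = \<gamma>}. c (fst ab) * e (snd ab))" for \<gamma>
  have finite_AB: "finite (A \<times> B)" using A(1) B(1) by simp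
  have m_g: "m (g ab) x = m (fst ab) x * m (snd ab) x" for ab x
    unfolding m_def g_def by (simp add: power_add prod.distrib)
  have "p x * q x = (\<Sum>\<gamma>\<in>C. k \<gamma> * m \<gamma> x)" for x
  proof -
    have "p x * q x = (\<Sum>ab\<in>A \<times> B. c (fst ab) * e (snd ab) * m (g ab) x)"
      using A(3) B(3)
      by (simp add: sum_product sum.cartesian_product m_g split_beta algebra_simps)
    also have "\<dots> = (\<Sum>\<gamma>\<in>C. \<Sum>ab\<in>{ab \<in> A \<times> B. g ab = \<gamma>}. c (fst ab) * e (snd ab) * m (g ab) x)"
      by (rule sum.group[symmetric]) (use finite_AB in \<open>auto simp: C_def\<close>)
    also have "\<dots> = (\<Sum>\<gamma>\<in>C. k \<gamma> * m \<gamma> x)"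
      unfolding k_def sum_distrib_right by (intro sum.cong refl) auto
    finally show ?thesis .
  qed
  moreover have "(\<forall>i\<ge>n. \<gamma> i = 0) \<and> (\<Sum>i<n. \<gamma> i) \<le> d1 + d2" if "\<gamma> \<in> C" for \<gamma>
  proof -
    obtain a b where ab: "a \<in> A" "b \<in> B" "\<gamma> = g (a, b)" using \<open>\<gamma> \<in> C\<close> by (auto simp: C_def)
    have "(\<Sum>i<n. \<gamma> i) = (\<Sum>i<n. a i) + (\<Sum>i<n. b i)" by (simp add: ab g_def sum.distrib)
    then show ?thesis using A(2) B(2) ab by (auto simp: g_def intro: add_mono)
  qed
  ultimately show ?thesis
    unfolding poly_deg_le_def m_def using finite_AB by (intro exI[of _ C] exI[of _ k]) (auto simp: C_def)
qed

lemma poly_deg_le_sum: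
  assumes "finite S" "\<And>y. y \<in> S \<Longrightarrow> poly_deg_le n d (P y)"
  shows "poly_deg_le n d (\<lambda>x. \<Sum>y\<in>S. P y x)"
  using assms
  by (induction S rule: finite_induct) (auto intro: poly_deg_le_const poly_deg_le_add)

lemma poly_deg_le_prod:
  assumes "finite I" "\<And>i. i \<in> I \<Longrightarrow> poly_deg_le n (d i) (P i)"
  shows "poly_deg_le n (\<Sum>i\<in>I. d i) (\<lambda>x. \<Prod>i\<in>I. P i x)"
  using assms
  by (induction I rule: finite_induct) (auto intro: poly_deg_le_const poly_deg_le_mult)

lemma poly_deg_le_affine: "j < n \<Longrightarrow> poly_deg_le n 1 (\<lambda>x. a + b * x j)"
  using poly_deg_le_add[OF poly_deg_le_const poly_deg_le_mult[OF poly_deg_le_const poly_deg_le_var]]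
  by simp

lemma finite_cube: "finite (cube n)"
proof -
  define indicator_of where "indicator_of S i = (if i \<in> S then 1 else (0::real))" for S :: "nat set" and i
  have "x = indicator_of {i. i < n \<and> x i = 1}" if "x \<in> cube n" for x
  proof
    show "x i = indicator_of {i. i < n \<and> x i = 1} i" for i
      using that by (cases "i < n") (auto simp: cube_def indicator_of_def)
  qed
  then have "cube n \<subseteq> indicator_of ` Pow {..<n}" by blast
  then show ?thesis by (rule finite_subset) simp
qed

definition cube_delta :: "nat \<Rightarrow> (nat \<Rightarrow> real) \<Rightarrow> (nat \<Rightarrow> real) \<Rightarrow> real" where
  "cube_delta n y x = (\<Prod>i<n. 1 - y i + (2 * y i - 1) * x i)"

lemma poly_deg_le_cube_delta: "poly_deg_le n n (cube_delta n y)"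
  using poly_deg_le_prod[of "{..<n}" n "\<lambda>_. 1"] poly_deg_le_affine
  unfolding cube_delta_def by simp

lemma cube_delta_eq:
  assumes "x \<in> cube n" "y \<in> cube n"
  shows "cube_delta n y x = (if x = y then 1 else 0)"
proof (cases "x = y")
  case True
  have "cube_delta n y x = (\<Prod>i<n. 1)"
    unfolding cube_delta_def by (rule prod.cong) (use assms True in \<open>auto simp: cube_def\<close>)
  then show ?thesis using True by simp
next
  case False
  then obtain i where "x i \<noteq> y i" by auto
  moreover have "i < n" using \<open>x i \<noteq> y i\<close> assms by (cases "i < n") (auto simp: cube_def)
  moreover have "x i \<in> {0, 1}" "y i \<in> {0, 1}" using assms \<open>i < n\<close> by (auto simp: cube_def)
  ultimately have "1 - y i + (2 * y i - 1) * x i = 0" by auto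
  then have "cube_delta n y x = 0"
    unfolding cube_delta_def using \<open>i < n\<close> by (intro prod_zero) auto
  then show ?thesis using False by simp
qed

lemma cube_interpolation: "\<exists>p. poly_deg_le n n p \<and> (\<forall>x\<in>cube n. p x = h x)"
proof (intro exI conjI ballI)
  show "poly_deg_le n n (\<lambda>x. \<Sum>y\<in>cube n. h y * cube_delta n y x)"
    using finite_cube poly_deg_le_mult[OF poly_deg_le_const poly_deg_le_cube_delta, of n 0]
    by (intro poly_deg_le_sum) auto
  show "(\<Sum>y\<in>cube n. h y * cube_delta n y x) = h x" if "x \<in> cube n" for x
  proof -
    have "(\<Sum>y\<in>cube n. h y * cube_delta n y x) = (\<Sum>y\<in>cube n. if y = x then h y else 0)"
      using that by (intro sum.cong) (auto simp: cube_delta_eq)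
    then show ?thesis using that finite_cube by simp
  qed
qed

definition one_sided_approx ::
    "nat \<Rightarrow> real \<Rightarrow> ((nat \<Rightarrow> real) \<Rightarrow> real) \<Rightarrow> ((nat \<Rightarrow> real) \<Rightarrow> real) \<Rightarrow> bool"
  where "one_sided_approx n \<epsilon> f p \<longleftrightarrow>
    (\<forall>x\<in>cube n. (f x = 0 \<longrightarrow> \<bar>p x\<bar> \<le> \<epsilon>) \<and> (f x = 1 \<longrightarrow> \<bar>p x\<bar> \<ge> 1))"

lemma Ndeg_attained:
  assumes "0 \<le> \<epsilon>"
  shows "\<exists>p. poly_deg_le n (Ndeg n \<epsilon> f) p \<and> one_sided_approx n \<epsilon> f p"
proof -
  obtain p where "poly_deg_le n n p" "\<forall>x\<in>cube n. p x = (if f x = 1 then 1 else 0)"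
    using cube_interpolation[of n "\<lambda>x. if f x = 1 then 1 else 0"] by blast
  then have "\<exists>d p. poly_deg_le n d p \<and> one_sided_approx n \<epsilon> f p"
    using assms unfolding one_sided_approx_def by (intro exI[of _ n] exI[of _ p]) auto
  then show ?thesis
    unfolding Ndeg_def one_sided_approx_def by (rule LeastI_ex)
qed

lemma square_ratio_le:
  fixes a b e :: real
  assumes "\<bar>a\<bar> \<le> e" "1 \<le> \<bar>b\<bar>"
  shows "a\<^sup>2 / (a\<^sup>2 + b\<^sup>2) \<le> e\<^sup>2"
proof -
  have "1 \<le> b\<^sup>2" using one_le_power[OF assms(2), of 2] by simp
  then have "1 \<le> a\<^sup>2 + b\<^sup>2" by (simp add: add_increasing)
  then have "a\<^sup>2 / (a\<^sup>2 + b\<^sup>2) \<le> a\<^sup>2" by (simp add: divide_le_eq mult_le_cancel_left1)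
  also have "\<dots> \<le> e\<^sup>2" using assms(1) by (metis abs_le_square_iff abs_of_nonneg abs_ge_zero order_trans)
  finally show ?thesis .
qed

lemma rdeg_le_of_one_sided_approx:
  assumes f: "\<forall>x\<in>cube n. f x \<in> {0, 1}" and \<epsilon>: "0 \<le> \<epsilon>" "\<epsilon> \<le> 1"
    and p: "poly_deg_le n d p" "one_sided_approx n \<epsilon> f p"
    and q: "poly_deg_le n d q" "one_sided_approx n \<epsilon> (\<lambda>x. 1 - f x) q"
  shows "rdeg n \<epsilon> f \<le> 2 * d"
proof -
  have "\<epsilon>\<^sup>2 \<le> \<epsilon>" using \<epsilon> by (simp add: power2_eq_square mult_left_le)
  have approx: "p x ^ 2 + q x ^ 2 \<noteq> 0 \<and> \<bar>f x - p x ^ 2 / (p x ^ 2 + q x ^ 2)\<bar> \<le> \<epsilon>"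
    if "x \<in> cube n" for x
  proof (cases "f x = 0")
    case True
    then have "\<bar>p x\<bar> \<le> \<epsilon>" "1 \<le> \<bar>q x\<bar>"
      using p(2) q(2) that unfolding one_sided_approx_def by auto
    then show ?thesis
      using square_ratio_le[of "p x" \<epsilon> "q x"] \<open>\<epsilon>\<^sup>2 \<le> \<epsilon>\<close> True by auto
  next
    case False
    then have "f x = 1" using f that by auto
    then have "1 \<le> \<bar>p x\<bar>" "\<bar>q x\<bar> \<le> \<epsilon>"
      using p(2) q(2) that unfolding one_sided_approx_def by auto
    then have "p x ^ 2 + q x ^ 2 \<noteq> 0" by (auto simp: add_nonneg_eq_0_iff)
    then have "f x - p x ^ 2 / (p x ^ 2 + q x ^ 2) = q x ^ 2 / (q x ^ 2 + p x ^ 2)"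
      using \<open>f x = 1\<close> by (simp add: field_simps)
    then show ?thesis
      using square_ratio_le[of "q x" \<epsilon> "p x"] \<open>\<bar>q x\<bar> \<le> \<epsilon>\<close> \<open>1 \<le> \<bar>p x\<bar>\<close> \<open>\<epsilon>\<^sup>2 \<le> \<epsilon>\<close>
        \<open>p x ^ 2 + q x ^ 2 \<noteq> 0\<close> by auto
  qed
  have "poly_deg_le n (2 * d) (\<lambda>x. p x ^ 2)" "poly_deg_le n (2 * d) (\<lambda>x. q x ^ 2)"
    using poly_deg_le_mult[OF p(1) p(1)] poly_deg_le_mult[OF q(1) q(1)]
    by (simp_all add: power2_eq_square mult_2)
  then have "poly_deg_le n (2 * d) (\<lambda>x. p x ^ 2)" "poly_deg_le n (2 * d) (\<lambda>x. p x ^ 2 + q x ^ 2)"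
    by (auto intro: poly_deg_le_add)
  then show ?thesis
    unfolding rdeg_def using approx by (intro Least_le) blast
qed

theorem lemma3p5:
  fixes n :: nat and \<epsilon> :: real and f :: "(nat \<Rightarrow> real) \<Rightarrow> real"
  assumes "\<forall>x\<in>cube n. f x \<in> {0, 1}"
    and "0 < \<epsilon>" and "\<epsilon> < 1"
  shows "rdeg n \<epsilon> f \<le> 2 * max (Ndeg n \<epsilon> f) (Ndeg n \<epsilon> (\<lambda>x. 1 - f x))"
proof -
  let ?D = "max (Ndeg n \<epsilon> f) (Ndeg n \<epsilon> (\<lambda>x. 1 - f x))"
  obtain p where p: "poly_deg_le n (Ndeg n \<epsilon> f) p" "one_sided_approx n \<epsilon> f p"
    using Ndeg_attained assms(2) less_imp_le by blast
  obtain q where q: "poly_deg_le n (Ndeg n \<epsilon> (\<lambda>x. 1 - f x)) q"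
      "one_sided_approx n \<epsilon> (\<lambda>x. 1 - f x) q"
    using Ndeg_attained assms(2) less_imp_le by blast
  have "poly_deg_le n ?D p" "poly_deg_le n ?D q"
    using p(1) q(1) by (auto elim: poly_deg_le_mono)
  then show ?thesis
    using rdeg_le_of_one_sided_approx assms p(2) q(2) by simp
qed

end
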